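(* Let $G = (V,E)$ be an unweighted graph with $n$ vertices, let $A_1,\ldots,A_p$ be non-empty subsets of $V$, and let $\ell, \delta \in \mathbb{N}$. Then either (1) there is a tree $T$ in $G$ of depth at most $4\delta\ell\ln n$ and with at most $4\delta\ell p \ln n$ vertices such that $V(T)\cap A_i \neq \emptyset$ for $i = 1,\ldots,p$; or (2) there is a set $S \subset V$ such that (a) $|N^\delta(S)\cap (V\setminus S)| < \min\{|S|,|V\setminus S|\}/\ell$ and (b) $|N^\delta(V\setminus S)\cap S| < \min\{|S|,|V\setminus S|\}/\ell$.
   Context: For $X\subseteq V$, $N(X)$ denotes the set of vertices at distance at most $1$ from $X$ in $G$ (so $X \subseteq N(X)$); $N^1(X) = N(X)$ and $N^\delta(X) = N(N^{\delta-1}(X))$ for $\delta \ge 2$. *)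

theory Defs
  imports Complex_Main
begin

definition simple_graph :: "'a set \<Rightarrow> ('a \<Rightarrow> 'a \<Rightarrow> bool) \<Rightarrow> bool" where
  "simple_graph V E \<longleftrightarrow> finite V \<and> (\<forall>u v. E u v \<longrightarrow> u \<in> V \<and> v \<in> V)
     \<and> (\<forall>u v. E u v \<longrightarrow> E v u) \<and> (\<forall>v. \<not> E v v)"

definition nbhd :: "'a set \<Rightarrow> ('a \<Rightarrow> 'a \<Rightarrow> bool) \<Rightarrow> 'a set \<Rightarrow> 'a set" where
  "nbhd V E X = X \<union> {v \<in> V. \<exists>u \<in> X. E u v}"

definition nbhd_pow :: "'a set \<Rightarrow> ('a \<Rightarrow> 'a \<Rightarrow> bool) \<Rightarrow> nat \<Rightarrow> 'a set \<Rightarrow> 'a set" where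
  "nbhd_pow V E d X = (nbhd V E ^^ d) X"

text \<open>T is the vertex set of a tree in G rooted at r, with parent function par
  (tree edges are {v, par v} for v in T - {r}), of depth at most D: every vertex
  of T reaches the root within at most D parent steps.\<close>
definition rooted_tree_in ::
  "'a set \<Rightarrow> ('a \<Rightarrow> 'a \<Rightarrow> bool) \<Rightarrow> 'a set \<Rightarrow> 'a \<Rightarrow> ('a \<Rightarrow> 'a) \<Rightarrow> real \<Rightarrow> bool" where
  "rooted_tree_in V E T r par D \<longleftrightarrow>
     T \<subseteq> V \<and> r \<in> T \<and>
     (\<forall>v \<in> T - {r}. par v \<in> T \<and> E v (par v)) \<and>
     (\<forall>v \<in> T. \<exists>k::nat. real k \<le> D \<and> (par ^^ k) v = r)"

end

theory Submission
  imports Defs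
begin

text \<open>If there is no sparse cut, no ball \<open>B\<^sub>j = N\<^bsup>j\<delta>\<^esup>(u)\<close> with at most \<open>n/2\<close> vertices is one:
  either \<open>B\<^sub>j\<^sub>+\<^sub>1\<close> exceeds \<open>B\<^sub>j\<close> by a \<open>1/l\<close> fraction of \<open>|B\<^sub>j|\<close>, or \<open>B\<^sub>j\<^sub>-\<^sub>1\<close> falls short of it by as much.
  Either way the ball sizes grow at least like \<open>exp (j / (2 l))\<close>, so balls of radius about
  \<open>2 l \<delta> ln (n/2)\<close> contain more than half of the vertices. Any two such balls meet, so every
  vertex is within \<open>4 \<delta> l ln n\<close> of any root, and the shortest paths from one vertex of each \<open>A\<^sub>i\<close>
  to the chosen vertex of \<open>A\<^sub>1\<close> form the required tree.\<close>

section \<open>Iterated neighbourhoods\<close>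

lemma nbhd_mono: "X \<subseteq> Y \<Longrightarrow> nbhd V E X \<subseteq> nbhd V E Y"
  unfolding nbhd_def by auto

lemma subset_nbhd: "X \<subseteq> nbhd V E X"
  unfolding nbhd_def by auto

lemma nbhd_UN: "nbhd V E (\<Union>x\<in>X. F x) = (\<Union>x\<in>X. nbhd V E (F x))"
  unfolding nbhd_def by auto

lemma nbhd_pow_0 [simp]: "nbhd_pow V E 0 X = X"
  by (simp add: nbhd_pow_def)

lemma nbhd_pow_Suc: "nbhd_pow V E (Suc k) X = nbhd V E (nbhd_pow V E k X)"
  by (simp add: nbhd_pow_def)

lemma nbhd_pow_add: "nbhd_pow V E (a + b) X = nbhd_pow V E a (nbhd_pow V E b X)"
  by (simp add: nbhd_pow_def funpow_add)

lemma nbhd_pow_mono: "X \<subseteq> Y \<Longrightarrow> nbhd_pow V E k X \<subseteq> nbhd_pow V E k Y"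
  by (induction k) (auto simp: nbhd_pow_Suc dest: nbhd_mono)

lemma subset_nbhd_pow: "X \<subseteq> nbhd_pow V E k X"
  by (induction k) (auto simp: nbhd_pow_Suc intro: subset_nbhd[THEN subsetD])

lemma nbhd_pow_mono_radius:
  assumes "k \<le> m"
  shows "nbhd_pow V E k X \<subseteq> nbhd_pow V E m X"
proof -
  have "nbhd_pow V E m X = nbhd_pow V E (m - k) (nbhd_pow V E k X)"
    using assms by (simp add: nbhd_pow_add[symmetric])
  then show ?thesis
    using subset_nbhd_pow by metis
qed

lemma nbhd_pow_subset: "X \<subseteq> V \<Longrightarrow> nbhd_pow V E k X \<subseteq> V"
  by (induction k) (auto simp: nbhd_pow_Suc nbhd_def)

lemma finite_nbhd_pow: "simple_graph V E \<Longrightarrow> X \<subseteq> V \<Longrightarrow> finite (nbhd_pow V E k X)"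
  using nbhd_pow_subset finite_subset unfolding simple_graph_def by metis

lemma nbhd_pow_eq_UN: "nbhd_pow V E k X = (\<Union>x\<in>X. nbhd_pow V E k {x})"
  by (induction k) (simp_all add: nbhd_pow_Suc nbhd_UN)

lemma nbhd_pow_singleton_sym:
  assumes G: "simple_graph V E" and "y \<in> nbhd_pow V E k {x}"
  shows "x \<in> nbhd_pow V E k {y}"
  using assms(2)
proof (induction k arbitrary: y)
  case 0
  then show ?case by simp
next
  case (Suc k)
  then consider "y \<in> nbhd_pow V E k {x}" | u where "u \<in> nbhd_pow V E k {x}" "E u y"
    by (auto simp: nbhd_pow_Suc nbhd_def)
  then show ?case
  proof cases
    case 1
    then show ?thesis
      using Suc.IH nbhd_pow_mono_radius[of k "Suc k" V E "{y}"] by auto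
  next
    case 2
    then have "{u} \<subseteq> nbhd V E {y}"
      using G unfolding simple_graph_def nbhd_def by auto
    then have "nbhd_pow V E k {u} \<subseteq> nbhd_pow V E k (nbhd_pow V E 1 {y})"
      by (intro nbhd_pow_mono) (simp add: nbhd_pow_def)
    also have "\<dots> = nbhd_pow V E (Suc k) {y}"
      by (simp add: nbhd_pow_add[symmetric])
    finally show ?thesis
      using Suc.IH[OF 2(1)] by auto
  qed
qed

lemma mem_nbhd_pow_iff:
  "simple_graph V E \<Longrightarrow> x \<in> nbhd_pow V E k Y \<longleftrightarrow> (\<exists>y\<in>Y. y \<in> nbhd_pow V E k {x})"
  by (subst nbhd_pow_eq_UN) (auto dest: nbhd_pow_singleton_sym)

lemma nbhd_pow_disjoint_commute:
  assumes "simple_graph V E"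
  shows "nbhd_pow V E k X \<inter> Y = {} \<longleftrightarrow> X \<inter> nbhd_pow V E k Y = {}"
  using nbhd_pow_singleton_sym[OF assms]
  by (subst (1 2) nbhd_pow_eq_UN) blast

section \<open>Growth of balls in the absence of sparse cuts\<close>

definition sparse_cut :: "'a set \<Rightarrow> ('a \<Rightarrow> 'a \<Rightarrow> bool) \<Rightarrow> nat \<Rightarrow> nat \<Rightarrow> 'a set \<Rightarrow> bool" where
  "sparse_cut V E \<delta> l S \<longleftrightarrow> S \<subset> V
     \<and> real (card (nbhd_pow V E \<delta> S \<inter> (V - S))) < real (min (card S) (card (V - S))) / l
     \<and> real (card (nbhd_pow V E \<delta> (V - S) \<inter> S)) < real (min (card S) (card (V - S))) / l"

lemma small_set_expands:
  assumes G: "simple_graph V E" and not_cut: "\<not> sparse_cut V E \<delta> l S"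
    and S: "S \<subseteq> V" "S \<noteq> {}" "real (card S) \<le> real (card V) / 2"
  shows "real (card S) / l \<le> real (card (nbhd_pow V E \<delta> S - S))
       \<or> real (card S) / l \<le> real (card (nbhd_pow V E \<delta> (V - S) \<inter> S))"
proof -
  have "finite V"
    using G unfolding simple_graph_def by simp
  then have "finite S" "card S \<le> card V"
    using S(1) by (auto intro: finite_subset card_mono)
  then have "S \<subset> V" and "min (card S) (card (V - S)) = card S"
    using S \<open>finite V\<close> by (auto simp: card_Diff_subset)
  moreover have "nbhd_pow V E \<delta> S \<inter> (V - S) = nbhd_pow V E \<delta> S - S"
    using nbhd_pow_subset[OF S(1)] by auto
  ultimately show ?thesis
    using not_cut unfolding sparse_cut_def by auto
qed

lemma card_ball_ge_2:
  fixes l :: nat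
  assumes G: "simple_graph V E" and not_cut: "\<not> sparse_cut V E \<delta> l {u}"
    and u: "u \<in> V" and "2 \<le> card V" "1 \<le> l"
  shows "2 \<le> card (nbhd_pow V E \<delta> {u})"
proof -
  have "real (card {u}) \<le> real (card V) / 2"
    using \<open>2 \<le> card V\<close> by simp
  then have "1 / l \<le> real (card (nbhd_pow V E \<delta> {u} - {u}))
      \<or> 1 / l \<le> real (card (nbhd_pow V E \<delta> (V - {u}) \<inter> {u}))"
    using small_set_expands[OF G not_cut] u by simp
  moreover have "0 < 1 / real l"
    using \<open>1 \<le> l\<close> by simp
  ultimately have "0 < real (card (nbhd_pow V E \<delta> {u} - {u}))
      \<or> 0 < real (card (nbhd_pow V E \<delta> (V - {u}) \<inter> {u}))"
    by linarith
  then have "nbhd_pow V E \<delta> {u} - {u} \<noteq> {} \<or> u \<in> nbhd_pow V E \<delta> (V - {u})"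
    by (elim disjE) (auto simp: card_gt_0_iff)
  then obtain w where "w \<noteq> u" "w \<in> nbhd_pow V E \<delta> {u}"
    using mem_nbhd_pow_iff[OF G, of u \<delta> "V - {u}"] by blast
  then have "{u, w} \<subseteq> nbhd_pow V E \<delta> {u}"
    using subset_nbhd_pow[of "{u}" V E \<delta>] by simp
  then have "card {u, w} \<le> card (nbhd_pow V E \<delta> {u})"
    using finite_nbhd_pow[OF G, of "{u}"] u by (intro card_mono) auto
  then show ?thesis
    using \<open>w \<noteq> u\<close> by simp
qed

text \<open>The ball of radius \<open>s + 2\<delta>\<close> is the \<open>\<delta>\<close>-neighbourhood of the ball \<open>S\<close> of radius
  \<open>s + \<delta>\<close>, and the \<open>\<delta>\<close>-neighbourhood of \<open>V - S\<close> misses the ball of radius \<open>s\<close>; so the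
  two expansion alternatives for \<open>S\<close> are growth of the next ball or shrinking of the previous.\<close>
lemma ball_growth_step:
  assumes G: "simple_graph V E" and not_cut: "\<not> sparse_cut V E \<delta> l (nbhd_pow V E (s + \<delta>) {u})"
    and u: "u \<in> V"
    and small: "real (card (nbhd_pow V E (s + \<delta>) {u})) \<le> real (card V) / 2"
  shows "(1 + 1 / l) * card (nbhd_pow V E (s + \<delta>) {u}) \<le> card (nbhd_pow V E (s + \<delta> + \<delta>) {u})
       \<or> card (nbhd_pow V E s {u}) \<le> (1 - 1 / l) * card (nbhd_pow V E (s + \<delta>) {u})"
proof -
  define P where "P = nbhd_pow V E s {u}"
  define S where "S = nbhd_pow V E (s + \<delta>) {u}"
  define N where "N = nbhd_pow V E (s + \<delta> + \<delta>) {u}"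
  have fin: "finite P" "finite S" "finite N"
    unfolding P_def S_def N_def using G u by (auto intro: finite_nbhd_pow)
  have "P \<subseteq> S" "S \<subseteq> N"
    unfolding P_def S_def N_def by (simp_all add: nbhd_pow_mono_radius)
  have "S \<subseteq> V" "S \<noteq> {}"
    unfolding S_def using u nbhd_pow_subset[of "{u}" V E] subset_nbhd_pow[of "{u}" V E] by auto
  have outer: "nbhd_pow V E \<delta> S = N"
    unfolding S_def N_def by (simp add: nbhd_pow_add[symmetric] add.commute)
  have "(V - S) \<inter> nbhd_pow V E \<delta> P = {}"
    unfolding P_def S_def by (auto simp: nbhd_pow_add[symmetric] add.commute)
  then have "nbhd_pow V E \<delta> (V - S) \<inter> S \<subseteq> S - P"
    using nbhd_pow_disjoint_commute[OF G] by blast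
  then have inner: "card (nbhd_pow V E \<delta> (V - S) \<inter> S) \<le> card S - card P"
    using card_mono[OF _ \<open>_ \<subseteq> S - P\<close>] fin \<open>P \<subseteq> S\<close> by (simp add: card_Diff_subset)
  have "card (N - S) = card N - card S"
    using fin \<open>S \<subseteq> N\<close> by (simp add: card_Diff_subset)
  moreover have "card S \<le> card N" "card P \<le> card S"
    using fin \<open>P \<subseteq> S\<close> \<open>S \<subseteq> N\<close> by (auto intro: card_mono)
  moreover note small_set_expands[OF G not_cut[folded S_def] \<open>S \<subseteq> V\<close> \<open>S \<noteq> {}\<close> small[folded S_def]]
  ultimately show ?thesis
    using inner unfolding outer P_def[symmetric] S_def[symmetric] N_def[symmetric]
    by (auto simp: algebra_simps of_nat_diff)
qed

lemma exp_half_inverse_bounds: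
  fixes l :: real
  assumes "1 \<le> l"
  shows "exp (1 / (2 * l)) \<le> 1 + 1 / l" and "(exp (1 / (2 * l)))\<^sup>2 * (1 - 1 / l) \<le> 1"
proof -
  show "exp (1 / (2 * l)) \<le> 1 + 1 / l"
    using assms real_exp_bound_lemma[of "1 / (2 * l)"] by simp
  have "(exp (1 / (2 * l)))\<^sup>2 = exp (1 / l)"
    by (simp add: power2_eq_square mult_exp_exp)
  then have "(exp (1 / (2 * l)))\<^sup>2 * (1 - 1 / l) \<le> exp (1 / l) * exp (- (1 / l))"
    using exp_ge_add_one_self[of "- (1 / l)"] by (simp add: mult_left_mono)
  then show "(exp (1 / (2 * l)))\<^sup>2 * (1 - 1 / l) \<le> 1"
    by (simp add: mult_exp_exp)
qed

text \<open>By the bounds above, either alternative of the step propagates \<open>exp (1 / (2 l))\<^sup>i \<le> b i\<close>.\<close>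
lemma exp_growth_of_expanding_sequence:
  fixes b :: "nat \<Rightarrow> real" and l :: real
  assumes l: "1 \<le> l" and "mono b" and b0: "1 \<le> b 0" and b1: "1 + 1 / l \<le> b 1"
    and step: "\<And>k. Suc k < j \<Longrightarrow>
      (1 + 1 / l) * b (Suc k) \<le> b (Suc (Suc k)) \<or> b k \<le> (1 - 1 / l) * b (Suc k)"
  shows "exp (1 / (2 * l)) ^ j \<le> b j"
proof -
  define \<rho> where "\<rho> = exp (1 / (2 * l))"
  have \<rho>: "\<rho> \<le> 1 + 1 / l" "\<rho>\<^sup>2 * (1 - 1 / l) \<le> 1"
    unfolding \<rho>_def using exp_half_inverse_bounds[OF l] by simp_all
  have b_nonneg: "0 \<le> b k" for k
    using b0 monoD[OF \<open>mono b\<close>, of 0 k] by simp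
  have "\<rho> ^ i \<le> b i" if "i \<le> j" for i
    using that
  proof (induction i rule: less_induct)
    case (less i)
    consider "i = 0" | "i = 1" | k where "i = Suc (Suc k)"
      by (metis One_nat_def not0_implies_Suc)
    then show ?case
    proof cases
      case 1
      then show ?thesis using b0 by simp
    next
      case 2
      then show ?thesis using b1 \<rho>(1) by simp
    next
      case 3
      have IH: "\<rho> ^ k \<le> b k" "\<rho> ^ Suc k \<le> b (Suc k)"
        using less.IH[of k] less.IH[of "Suc k"] less.prems 3 by simp_all
      have "0 < \<rho>"
        unfolding \<rho>_def by simp
      from step[of k] consider
        "(1 + 1 / l) * b (Suc k) \<le> b (Suc (Suc k))" | "b k \<le> (1 - 1 / l) * b (Suc k)"
        using less.prems 3 by auto
      then show ?thesis
      proof cases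
        case 1
        have "\<rho> ^ i = \<rho> * \<rho> ^ Suc k"
          using 3 by simp
        also have "\<dots> \<le> (1 + 1 / l) * b (Suc k)"
          using \<rho>(1) IH \<open>0 < \<rho>\<close> by (intro mult_mono) auto
        finally show ?thesis
          using 1 3 by simp
      next
        case 2
        have "\<rho> ^ i = \<rho>\<^sup>2 * \<rho> ^ k"
          using 3 by (simp add: power2_eq_square)
        also have "\<dots> \<le> \<rho>\<^sup>2 * ((1 - 1 / l) * b (Suc k))"
          using IH 2 by (intro mult_left_mono) auto
        also have "\<dots> = (\<rho>\<^sup>2 * (1 - 1 / l)) * b (Suc k)"
          by (simp only: mult.assoc)
        also have "\<dots> \<le> 1 * b (Suc k)"
          using \<rho>(2) b_nonneg by (rule mult_right_mono)
        also have "\<dots> \<le> b i"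
          using monoD[OF \<open>mono b\<close>, of "Suc k" i] 3 by simp
        finally show ?thesis .
      qed
    qed
  qed
  then show ?thesis
    unfolding \<rho>_def by simp
qed

lemma card_ball_gt_half:
  fixes l :: nat
  assumes G: "simple_graph V E" and no_cut: "\<forall>S. \<not> sparse_cut V E \<delta> l S"
    and u: "u \<in> V" and "2 \<le> card V" and l: "1 \<le> l"
    and K: "2 * l * ln (real (card V) / 2) < K"
  shows "real (card V) / 2 < card (nbhd_pow V E (K * \<delta>) {u})"
proof (rule ccontr)
  define b where "b j = real (card (nbhd_pow V E (j * \<delta>) {u}))" for j
  assume "\<not> ?thesis"
  then have bK: "b K \<le> real (card V) / 2"
    unfolding b_def by simp
  have "mono b"
    unfolding b_def using G u
    by (intro monoI) (simp add: card_mono finite_nbhd_pow nbhd_pow_mono_radius)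
  have "2 \<le> b 1"
    unfolding b_def using card_ball_ge_2[OF G _ u \<open>2 \<le> card V\<close> l] no_cut by simp
  moreover have "1 + 1 / real l \<le> 2"
    using l by simp
  ultimately have "1 + 1 / real l \<le> b 1"
    by linarith
  have "(1 + 1 / l) * b (Suc k) \<le> b (Suc (Suc k)) \<or> b k \<le> (1 - 1 / l) * b (Suc k)"
    if "Suc k < K" for k
  proof -
    have radii: "k * \<delta> + \<delta> = Suc k * \<delta>" "Suc k * \<delta> + \<delta> = Suc (Suc k) * \<delta>"
      by simp_all
    have "b (Suc k) \<le> real (card V) / 2"
      using monoD[OF \<open>mono b\<close>, of "Suc k" K] that bK by simp
    then show ?thesis
      using ball_growth_step[OF G no_cut[rule_format] u, where s = "k * \<delta>"]
      unfolding b_def radii by blast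
  qed
  moreover have "1 \<le> b 0"
    by (simp add: b_def)
  ultimately have growth: "exp (1 / (2 * l)) ^ K \<le> b K"
    using exp_growth_of_expanding_sequence[of l b K] \<open>mono b\<close> \<open>1 + 1 / real l \<le> b 1\<close> l
    by simp
  have "real (card V) / 2 = exp (ln (real (card V) / 2))"
    using \<open>2 \<le> card V\<close> by simp
  also have "\<dots> < exp (K * (1 / (2 * l)))"
    using K l by (simp add: field_simps)
  also have "\<dots> = exp (1 / (2 * l)) ^ K"
    by (rule exp_of_nat_mult)
  finally show False
    using growth bK by simp
qed

lemma mem_nbhd_pow_double_if_balls_gt_half:
  assumes G: "simple_graph V E" and "u \<in> V" "v \<in> V"
    and bu: "real (card V) / 2 < card (nbhd_pow V E R {u})"
    and bv: "real (card V) / 2 < card (nbhd_pow V E R {v})"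
  shows "v \<in> nbhd_pow V E (R + R) {u}"
proof -
  have sub: "nbhd_pow V E R {u} \<subseteq> V" "nbhd_pow V E R {v} \<subseteq> V"
    using assms(2,3) by (simp_all add: nbhd_pow_subset)
  have "finite V"
    using G unfolding simple_graph_def by simp
  have "nbhd_pow V E R {u} \<inter> nbhd_pow V E R {v} \<noteq> {}"
  proof
    assume "nbhd_pow V E R {u} \<inter> nbhd_pow V E R {v} = {}"
    then have "card (nbhd_pow V E R {u}) + card (nbhd_pow V E R {v}) \<le> card V"
      using sub \<open>finite V\<close> card_mono[of V "nbhd_pow V E R {u} \<union> nbhd_pow V E R {v}"]
      by (simp add: card_Un_disjoint finite_subset)
    then show False
      using bu bv by linarith
  qed
  then obtain w where w: "w \<in> nbhd_pow V E R {u}" "v \<in> nbhd_pow V E R {w}"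
    using nbhd_pow_singleton_sym[OF G] by blast
  have "nbhd_pow V E R {w} \<subseteq> nbhd_pow V E R (nbhd_pow V E R {u})"
    using w(1) by (simp add: nbhd_pow_mono)
  also have "\<dots> = nbhd_pow V E (R + R) {u}"
    by (simp only: nbhd_pow_add)
  finally show ?thesis
    using w(2) by blast
qed

section \<open>Shortest-path trees\<close>

definition hop_dist :: "'a set \<Rightarrow> ('a \<Rightarrow> 'a \<Rightarrow> bool) \<Rightarrow> 'a \<Rightarrow> 'a \<Rightarrow> nat" where
  "hop_dist V E r v = (LEAST k. v \<in> nbhd_pow V E k {r})"

lemma mem_nbhd_pow_hop_dist: "v \<in> nbhd_pow V E k {r} \<Longrightarrow> v \<in> nbhd_pow V E (hop_dist V E r v) {r}"
  unfolding hop_dist_def by (rule LeastI)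

lemma hop_dist_le: "v \<in> nbhd_pow V E k {r} \<Longrightarrow> hop_dist V E r v \<le> k"
  unfolding hop_dist_def by (rule Least_le)

lemma hop_dist_eq_0_iff: "v \<in> nbhd_pow V E k {r} \<Longrightarrow> hop_dist V E r v = 0 \<longleftrightarrow> v = r"
  using mem_nbhd_pow_hop_dist[of v V E k r] hop_dist_le[of r V E 0 r] by auto

lemma hop_dist_parent:
  assumes G: "simple_graph V E" and v: "v \<in> nbhd_pow V E k {r}" and pos: "0 < hop_dist V E r v"
  obtains u where "E v u" "Suc (hop_dist V E r u) = hop_dist V E r v"
proof -
  obtain m where m: "hop_dist V E r v = Suc m"
    using pos gr0_implies_Suc by blast
  have "v \<in> nbhd V E (nbhd_pow V E m {r})"
    using mem_nbhd_pow_hop_dist[OF v] m by (simp add: nbhd_pow_Suc)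
  moreover have not_m: "v \<notin> nbhd_pow V E m {r}"
    using hop_dist_le[of v V E m r] m by auto
  ultimately obtain u where u: "u \<in> nbhd_pow V E m {r}" "E u v"
    unfolding nbhd_def by auto
  have "\<not> hop_dist V E r u < m"
  proof
    assume less: "hop_dist V E r u < m"
    have "v \<in> nbhd V E (nbhd_pow V E (hop_dist V E r u) {r})"
      using mem_nbhd_pow_hop_dist[OF u(1)] u(2) G unfolding nbhd_def simple_graph_def by auto
    then have "v \<in> nbhd_pow V E (Suc (hop_dist V E r u)) {r}"
      by (simp add: nbhd_pow_Suc)
    with less not_m show False
      using nbhd_pow_mono_radius[of "Suc (hop_dist V E r u)" m V E "{r}"] by auto
  qed
  then have "hop_dist V E r u = m"
    using hop_dist_le[OF u(1)] by simp
  moreover have "E v u"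
    using u(2) G unfolding simple_graph_def by auto
  ultimately show thesis
    using that m by simp
qed

lemma shortest_path_parent:
  assumes G: "simple_graph V E" and reach: "V \<subseteq> nbhd_pow V E R {r}"
  obtains par where "\<And>v. v \<in> V \<Longrightarrow> 0 < hop_dist V E r v \<Longrightarrow>
    E v (par v) \<and> par v \<in> V \<and> Suc (hop_dist V E r (par v)) = hop_dist V E r v"
proof -
  let ?d = "hop_dist V E r"
  define par where "par v = (SOME u. E v u \<and> Suc (?d u) = ?d v)" for v
  have "E v (par v) \<and> par v \<in> V \<and> Suc (?d (par v)) = ?d v" if "v \<in> V" "0 < ?d v" for v
  proof -
    have "E v (par v) \<and> Suc (?d (par v)) = ?d v"
      unfolding par_def
      using hop_dist_parent[OF G subsetD[OF reach \<open>v \<in> V\<close>] \<open>0 < ?d v\<close>] by (rule someI_ex) blast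
    then show ?thesis
      using G unfolding simple_graph_def by auto
  qed
  then show thesis
    by (rule that)
qed

lemma funpow_parent:
  fixes d :: "'a \<Rightarrow> nat"
  assumes par: "\<And>v. v \<in> V \<Longrightarrow> 0 < d v \<Longrightarrow> par v \<in> V \<and> Suc (d (par v)) = d v"
    and "v \<in> V" "i \<le> d v"
  shows "(par ^^ i) v \<in> V \<and> d ((par ^^ i) v) = d v - i"
  using \<open>i \<le> d v\<close>
proof (induction i)
  case 0
  then show ?case using \<open>v \<in> V\<close> by simp
next
  case (Suc i)
  then show ?case using par[of "(par ^^ i) v"] by auto
qed

definition parent_chain :: "('a \<Rightarrow> 'a) \<Rightarrow> nat \<Rightarrow> 'a \<Rightarrow> 'a set" where
  "parent_chain par n x = (\<lambda>k. (par ^^ k) x) ` {..<n}"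

lemma card_parent_chain_le: "card (parent_chain par n x) \<le> n"
  unfolding parent_chain_def using card_image_le[of "{..<n}"] by simp

lemma rooted_tree_in_parent_chains:
  assumes G: "simple_graph V E" and r: "r \<in> V"
    and reach: "V \<subseteq> nbhd_pow V E R {r}" and X: "X \<subseteq> V"
    and par: "\<And>v. v \<in> V \<Longrightarrow> 0 < hop_dist V E r v \<Longrightarrow>
      E v (par v) \<and> par v \<in> V \<and> Suc (hop_dist V E r (par v)) = hop_dist V E r v"
  shows "rooted_tree_in V E (insert r (\<Union>x\<in>X. parent_chain par (hop_dist V E r x) x)) r par (real R)"
    (is "rooted_tree_in V E ?T r par _")
proof -
  let ?d = "hop_dist V E r"
  have iter: "(par ^^ i) v \<in> V \<and> ?d ((par ^^ i) v) = ?d v - i" if "v \<in> V" "i \<le> ?d v" for v i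
    using par by (intro funpow_parent[of V ?d par v i] that) auto
  have d0: "v = r" if "v \<in> V" "?d v = 0" for v
    using hop_dist_eq_0_iff[OF subsetD[OF reach \<open>v \<in> V\<close>]] that(2) by simp
  have T_V: "?T \<subseteq> V"
    unfolding parent_chain_def using r iter X by auto
  moreover have "par v \<in> ?T \<and> E v (par v)" if v: "v \<in> ?T - {r}" for v
  proof -
    obtain x k where x: "x \<in> X" "k < ?d x" "v = (par ^^ k) x"
      using v unfolding parent_chain_def by auto
    then have "v \<in> V" "0 < ?d v" "?d v = ?d x - k"
      using iter[of x k] X by auto
    have "par v \<in> ?T"
    proof (cases "Suc k < ?d x")
      case True
      then have "par v \<in> parent_chain par (?d x) x"
        unfolding parent_chain_def using x(3) by (intro image_eqI[of _ _ "Suc k"]) simp_all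
      then show ?thesis
        using x(1) by blast
    next
      case False
      then have "?d (par v) = 0"
        using par[OF \<open>v \<in> V\<close> \<open>0 < ?d v\<close>] \<open>?d v = ?d x - k\<close> x(2) by linarith
      then show ?thesis
        using d0[of "par v"] par[OF \<open>v \<in> V\<close> \<open>0 < ?d v\<close>] by simp
    qed
    then show ?thesis
      using par[OF \<open>v \<in> V\<close> \<open>0 < ?d v\<close>] by simp
  qed
  moreover have "\<exists>k. real k \<le> real R \<and> (par ^^ k) v = r" if "v \<in> ?T" for v
  proof (intro exI conjI)
    have "v \<in> V"
      using T_V that by blast
    show "real (?d v) \<le> real R"
      using hop_dist_le subsetD[OF reach \<open>v \<in> V\<close>] by simp
    show "(par ^^ ?d v) v = r"
      using iter[OF \<open>v \<in> V\<close>, of "?d v"] d0 \<open>v \<in> V\<close> by simp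
  qed
  ultimately show ?thesis
    unfolding rooted_tree_in_def by simp
qed

lemma shortest_path_tree:
  assumes G: "simple_graph V E" and r: "r \<in> V"
    and reach: "V \<subseteq> nbhd_pow V E R {r}" and X: "X \<subseteq> V"
  obtains T par where "rooted_tree_in V E T r par (real R)" "X \<subseteq> T" "card T \<le> 1 + card X * R"
proof -
  let ?d = "hop_dist V E r"
  obtain par where par: "\<And>v. v \<in> V \<Longrightarrow> 0 < ?d v \<Longrightarrow>
      E v (par v) \<and> par v \<in> V \<and> Suc (?d (par v)) = ?d v"
    using shortest_path_parent[OF G reach] by blast
  define T where "T = insert r (\<Union>x\<in>X. parent_chain par (?d x) x)"
  have "X \<subseteq> T"
  proof
    fix x assume "x \<in> X"
    show "x \<in> T"
    proof (cases "?d x = 0")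
      case True
      have "x \<in> V"
        using X \<open>x \<in> X\<close> by blast
      then have "x = r"
        using hop_dist_eq_0_iff[OF subsetD[OF reach \<open>x \<in> V\<close>]] True by simp
      then show ?thesis
        unfolding T_def by simp
    next
      case False
      then have "x \<in> parent_chain par (?d x) x"
        unfolding parent_chain_def by (intro image_eqI[of _ _ 0]) simp_all
      then show ?thesis
        using \<open>x \<in> X\<close> unfolding T_def by blast
    qed
  qed
  moreover have "card T \<le> 1 + card X * R"
  proof -
    have "finite X"
      using X G finite_subset unfolding simple_graph_def by auto
    then have "card T \<le> Suc (card (\<Union>x\<in>X. parent_chain par (?d x) x))"
      unfolding T_def parent_chain_def by (simp add: card_insert_if)
    also have "card (\<Union>x\<in>X. parent_chain par (?d x) x) \<le> (\<Sum>x\<in>X. card (parent_chain par (?d x) x))"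
      by (rule card_UN_le[OF \<open>finite X\<close>])
    also have "\<dots> \<le> (\<Sum>x\<in>X. R)"
    proof (rule sum_mono)
      fix x assume "x \<in> X"
      then have "?d x \<le> R"
        using X \<open>x \<in> X\<close> by (intro hop_dist_le[OF subsetD[OF reach]]) blast
      then show "card (parent_chain par (?d x) x) \<le> R"
        by (rule order_trans[OF card_parent_chain_le])
    qed
    finally show ?thesis
      by simp
  qed
  moreover have "rooted_tree_in V E T r par (real R)"
    unfolding T_def by (rule rooted_tree_in_parent_chains[OF G r reach X par])
  ultimately show thesis
    using that by blast
qed

section \<open>The dichotomy\<close>

lemma rooted_tree_in_mono: "rooted_tree_in V E T r par D \<Longrightarrow> D \<le> D' \<Longrightarrow> rooted_tree_in V E T r par D'"
  unfolding rooted_tree_in_def by (meson order_trans)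

lemma ln_2_ge_half: "1 / 2 \<le> ln (2 :: real)"
proof -
  have "exp (1 / 2 :: real) \<le> 2"
    using real_exp_bound_lemma[of "1 / 2"] by simp
  then show ?thesis
    using ln_ge_iff[of 2 "1 / 2"] by simp
qed

lemma double_radius_le:
  fixes x l :: real
  assumes "1 \<le> l" "2 \<le> x"
  shows "2 * real (nat \<lfloor>2 * l * ln (x / 2)\<rfloor> + 1) \<le> 4 * l * ln x"
proof -
  have "0 \<le> 2 * l * ln (x / 2)"
    using assms by simp
  then have "real (nat \<lfloor>2 * l * ln (x / 2)\<rfloor>) \<le> 2 * l * ln (x / 2)"
    by simp
  also have "\<dots> = 2 * (l * ln x) - 2 * (l * ln 2)"
    using assms by (simp add: ln_div algebra_simps)
  finally have "real (nat \<lfloor>2 * l * ln (x / 2)\<rfloor>) \<le> 2 * (l * ln x) - 2 * (l * ln 2)" .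
  moreover have "1 / 2 \<le> l * ln 2"
    using assms ln_2_ge_half mult_mono[of 1 l "1 / 2" "ln 2"] by simp
  ultimately show ?thesis
    by simp
qed

lemma radius_le_if_no_sparse_cut:
  fixes l \<delta> :: nat
  assumes G: "simple_graph V E" and no_cut: "\<forall>S. \<not> sparse_cut V E \<delta> l S"
    and "2 \<le> card V" "1 \<le> l" "1 \<le> \<delta>"
  obtains R where "\<And>u. u \<in> V \<Longrightarrow> V \<subseteq> nbhd_pow V E R {u}" "1 \<le> R"
    "real R \<le> 4 * real \<delta> * real l * ln (card V)"
proof -
  define K where "K = nat \<lfloor>2 * real l * ln (real (card V) / 2)\<rfloor> + 1"
  have "2 * real l * ln (real (card V) / 2) < K"
    unfolding K_def by linarith
  then have big: "real (card V) / 2 < card (nbhd_pow V E (K * \<delta>) {v})" if "v \<in> V" for v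
    using card_ball_gt_half[OF G no_cut that \<open>2 \<le> card V\<close> \<open>1 \<le> l\<close>] by simp
  have "V \<subseteq> nbhd_pow V E (K * \<delta> + K * \<delta>) {u}" if "u \<in> V" for u
    using mem_nbhd_pow_double_if_balls_gt_half[OF G that _ big[OF that] big] by blast
  moreover have "1 \<le> K * \<delta> + K * \<delta>"
    unfolding K_def using \<open>1 \<le> \<delta>\<close> by simp
  moreover have "real (K * \<delta> + K * \<delta>) \<le> 4 * real \<delta> * real l * ln (card V)"
  proof -
    have "2 * real K \<le> 4 * real l * ln (card V)"
      unfolding K_def using double_radius_le[of l "card V"] assms(3,4) by simp
    then have "real \<delta> * (2 * real K) \<le> real \<delta> * (4 * real l * ln (card V))"
      by (rule mult_left_mono) simp
    then show ?thesis
      by (simp add: algebra_simps)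
  qed
  ultimately show thesis
    by (rule that)
qed

lemma tree_meeting_all_sets:
  assumes G: "simple_graph V E" and "1 \<le> p"
    and A: "\<And>i. i \<in> {1..p} \<Longrightarrow> A i \<subseteq> V \<and> A i \<noteq> {}"
    and reach: "\<And>u. u \<in> V \<Longrightarrow> V \<subseteq> nbhd_pow V E R {u}"
  obtains T r par where "rooted_tree_in V E T r par (real R)" "card T \<le> 1 + (p - 1) * R"
    "\<forall>i \<in> {1..p}. T \<inter> A i \<noteq> {}"
proof -
  obtain a where a: "\<forall>i\<in>{1..p}. a i \<in> A i"
    using bchoice[of "{1..p}" "\<lambda>i x. x \<in> A i"] A by blast
  then have "a ` {1..p} \<subseteq> V"
    using A by blast
  then have "a 1 \<in> V" "a ` {2..p} \<subseteq> V"
    using \<open>1 \<le> p\<close> by auto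
  then obtain T par where T: "rooted_tree_in V E T (a 1) par (real R)"
      "a ` {2..p} \<subseteq> T" "card T \<le> 1 + card (a ` {2..p}) * R"
    using shortest_path_tree[OF G _ reach] by blast
  have "card (a ` {2..p}) \<le> p - 1"
    using card_image_le[of "{2..p}" a] by simp
  then have "card T \<le> 1 + (p - 1) * R"
    using T(3) mult_le_mono1 by (meson add_left_mono order_trans)
  moreover have "\<forall>i \<in> {1..p}. T \<inter> A i \<noteq> {}"
  proof
    fix i assume i: "i \<in> {1..p}"
    have "a 1 \<in> T"
      using T(1) unfolding rooted_tree_in_def by blast
    then have "a i \<in> T"
      using T(2) i by (cases "i = 1") auto
    then show "T \<inter> A i \<noteq> {}"
      using a i by blast
  qed
  ultimately show thesis
    using that T(1) by blast
qed

theorem lemma11: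
  fixes V :: "'a set" and E :: "'a \<Rightarrow> 'a \<Rightarrow> bool"
    and A :: "nat \<Rightarrow> 'a set" and p l \<delta> :: nat
  assumes "simple_graph V E"
    and "card V \<ge> 2"
    and "p \<ge> 1" and "l \<ge> 1" and "\<delta> \<ge> 1"
    and "\<And>i. i \<in> {1..p} \<Longrightarrow> A i \<subseteq> V \<and> A i \<noteq> {}"
  shows "(\<exists>T r par. rooted_tree_in V E T r par (4 * \<delta> * l * ln (card V))
            \<and> real (card T) \<le> 4 * \<delta> * l * p * ln (card V)
            \<and> (\<forall>i \<in> {1..p}. T \<inter> A i \<noteq> {}))
       \<or> (\<exists>S. S \<subset> V
            \<and> real (card (nbhd_pow V E \<delta> S \<inter> (V - S))) < real (min (card S) (card (V - S))) / l
            \<and> real (card (nbhd_pow V E \<delta> (V - S) \<inter> S)) < real (min (card S) (card (V - S))) / l)"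
proof -
  define D where "D = 4 * real \<delta> * real l * ln (card V)"
  consider (cut) "\<exists>S. sparse_cut V E \<delta> l S"
    | (radius) R where "\<And>u. u \<in> V \<Longrightarrow> V \<subseteq> nbhd_pow V E R {u}" "1 \<le> R" "real R \<le> D"
    using radius_le_if_no_sparse_cut[OF assms(1) _ assms(2,4,5)] unfolding D_def by blast
  then show ?thesis
  proof cases
    case cut
    then show ?thesis
      unfolding sparse_cut_def by blast
  next
    case radius
    then obtain T r par where T: "rooted_tree_in V E T r par (real R)"
        "card T \<le> 1 + (p - 1) * R" "\<forall>i \<in> {1..p}. T \<inter> A i \<noteq> {}"
      using tree_meeting_all_sets[OF assms(1,3), where A = A, OF assms(6)] by blast
    have "real (card T) \<le> 1 + real (p - 1) * real R"
      using T(2) by (metis of_nat_1 of_nat_add of_nat_le_iff of_nat_mult)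
    also have "\<dots> \<le> D + real (p - 1) * D"
      using radius(2,3) by (intro add_mono mult_left_mono) auto
    also have "\<dots> = 4 * \<delta> * l * p * ln (card V)"
      using assms(3) unfolding D_def by (simp add: of_nat_diff algebra_simps)
    finally have "real (card T) \<le> 4 * \<delta> * l * p * ln (card V)" .
    moreover have "rooted_tree_in V E T r par (4 * \<delta> * l * ln (card V))"
      using rooted_tree_in_mono[OF T(1) radius(3)] unfolding D_def by simp
    ultimately show ?thesis
      using T(3) by blast
  qed
qed

end
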